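(* Let $F_0=\begin{pmatrix}1&1&1\\1&1&0\\1&0&1\end{pmatrix}$. Then $\|F_0\|_{\mathrm{Schur}}\ge\frac{\sqrt{26}}{4}>\frac{1+\sqrt{2}}{2}$. Consequently, if $I$ is any index set and $A=(A(s,t))_{s,t\in I}$ is a matrix for which there exist distinct $s_1,s_2,s_3\in I$ and distinct $t_1,t_2,t_3\in I$ with $(A(s_i,t_j))_{i,j=1}^3=F_0$, then $\|A\|_{\mathrm{Schur}}>\frac{1+\sqrt{2}}{2}$.
   Context: For an index set $I$, let $\mathcal{K}_0$ be the space of matrices indexed by $I\times I$ with only finitely many nonzero entries, viewed as operators on $\ell^2(I)$. The Schur product of matrices $A,X$ indexed by $I\times I$ is $(A\bullet X)(s,t)=A(s,t)X(s,t)$. The Schur multiplier norm of $A$ is $\|A\|_{\mathrm{Schur}}=\sup\{\|A\bullet X\|_{\mathcal{B}(\ell^2(I))}/\|X\|_{\mathcal{B}(\ell^2(I))}: 0\ne X\in\mathcal{K}_0\}$. *)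

theory Defs
  imports "HOL-Analysis.Analysis"
begin

text \<open>Matrices indexed by I x I are functions 'i => 'i => complex; only entries in I x I matter.
  Finitely supported vectors in l2(I) and finitely supported matrices (the space K_0).\<close>

definition fsupp_vec :: "'i set \<Rightarrow> ('i \<Rightarrow> complex) \<Rightarrow> bool" where
  "fsupp_vec I x \<longleftrightarrow> finite {t. x t \<noteq> 0} \<and> {t. x t \<noteq> 0} \<subseteq> I"

definition fsupp_mat :: "'i set \<Rightarrow> ('i \<Rightarrow> 'i \<Rightarrow> complex) \<Rightarrow> bool" where
  "fsupp_mat I X \<longleftrightarrow> finite {(s,t). X s t \<noteq> 0} \<and> {(s,t). X s t \<noteq> 0} \<subseteq> I \<times> I"

definition l2norm :: "('i \<Rightarrow> complex) \<Rightarrow> real" where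
  "l2norm v = sqrt (\<Sum>s\<in>{s. v s \<noteq> 0}. (cmod (v s))\<^sup>2)"

definition matvec :: "('i \<Rightarrow> 'i \<Rightarrow> complex) \<Rightarrow> ('i \<Rightarrow> complex) \<Rightarrow> ('i \<Rightarrow> complex)" where
  "matvec X x = (\<lambda>s. \<Sum>t\<in>{t. x t \<noteq> 0}. X s t * x t)"

text \<open>Operator norm on l2(I) of a finitely supported matrix (computed over the dense
  subspace of finitely supported vectors).\<close>
definition op_norm_on :: "'i set \<Rightarrow> ('i \<Rightarrow> 'i \<Rightarrow> complex) \<Rightarrow> real" where
  "op_norm_on I X = Sup {l2norm (matvec X x) | x. fsupp_vec I x \<and> l2norm x \<le> 1}"

definition schur_prod :: "('i \<Rightarrow> 'i \<Rightarrow> complex) \<Rightarrow> ('i \<Rightarrow> 'i \<Rightarrow> complex) \<Rightarrow> ('i \<Rightarrow> 'i \<Rightarrow> complex)" where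
  "schur_prod A X = (\<lambda>s t. A s t * X s t)"

definition schur_norm :: "'i set \<Rightarrow> ('i \<Rightarrow> 'i \<Rightarrow> complex) \<Rightarrow> ereal" where
  "schur_norm I A = Sup {ereal (op_norm_on I (schur_prod A X) / op_norm_on I X) | X.
      fsupp_mat I X \<and> X \<noteq> (\<lambda>_ _. 0)}"

definition F0 :: "nat \<Rightarrow> nat \<Rightarrow> complex" where
  "F0 i j = (if i < 3 \<and> j < 3 then (if (i = 1 \<and> j = 2) \<or> (i = 2 \<and> j = 1) then 0 else 1) else 0)"

end

theory Submission
  imports Defs
begin

text \<open>
  Let \<open>X = (2/3) J - 1\<close>, where \<open>J\<close> is the all-ones 3x3 matrix. \<open>X\<close> is unitary, so
  \<open>\<parallel>X\<parallel> = 1\<close>, while \<open>F\<^sub>0 \<bullet> X\<close> maps the rational unit vector \<open>(41, -30, -30)/59\<close> to a vector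
  of squared length at least \<open>26/16\<close>; so the Schur norm of \<open>F\<^sub>0\<close> is at least \<open>\<surd>26/4\<close>. The same test matrix, placed
  at the rows \<open>s\<^sub>i\<close> and columns \<open>t\<^sub>j\<close> of an arbitrary index set, gives the same bound for every
  matrix containing \<open>F\<^sub>0\<close> as a 3x3 submatrix.
\<close>

definition embed_vec :: "nat \<Rightarrow> (nat \<Rightarrow> 'i) \<Rightarrow> (nat \<Rightarrow> complex) \<Rightarrow> 'i \<Rightarrow> complex" where
  "embed_vec n s y = (\<lambda>a. \<Sum>i<n. if a = s i then y i else 0)"

definition embed_mat ::
    "nat \<Rightarrow> (nat \<Rightarrow> 'i) \<Rightarrow> (nat \<Rightarrow> 'i) \<Rightarrow> (nat \<Rightarrow> nat \<Rightarrow> complex) \<Rightarrow> 'i \<Rightarrow> 'i \<Rightarrow> complex" where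
  "embed_mat n s t c = (\<lambda>a b. \<Sum>i<n. \<Sum>j<n. if a = s i \<and> b = t j then c i j else 0)"

lemma l2norm_eq_sum:
  assumes "finite F" "{a. v a \<noteq> 0} \<subseteq> F"
  shows "l2norm v = sqrt (\<Sum>a\<in>F. (cmod (v a))\<^sup>2)"
  unfolding l2norm_def
  by (rule arg_cong[where f=sqrt], rule sum.mono_neutral_left) (use assms in auto)

lemma l2norm_nonneg: "0 \<le> l2norm v"
  by (simp add: l2norm_def sum_nonneg)

lemma sum_sq_le_l2norm_sq:
  fixes n :: nat
  assumes "finite {a. x a \<noteq> 0}" "inj_on t {..<n}"
  shows "(\<Sum>j<n. (cmod (x (t j)))\<^sup>2) \<le> (l2norm x)\<^sup>2"
proof -
  let ?F = "{a. x a \<noteq> 0} \<union> t ` {..<n}"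
  have "(\<Sum>j<n. (cmod (x (t j)))\<^sup>2) = (\<Sum>a\<in>t ` {..<n}. (cmod (x a))\<^sup>2)"
    using assms(2) by (simp add: sum.reindex)
  also have "\<dots> \<le> (\<Sum>a\<in>?F. (cmod (x a))\<^sup>2)"
    using assms(1) by (intro sum_mono2) auto
  also have "\<dots> = (l2norm x)\<^sup>2"
    using l2norm_eq_sum[of ?F x] assms(1) by (simp add: sum_nonneg)
  finally show ?thesis .
qed

lemma embed_vec_at:
  assumes "inj_on s {..<n}" "k < n"
  shows "embed_vec n s y (s k) = y k"
proof -
  have "embed_vec n s y (s k) = (\<Sum>i<n. if i = k then y i else 0)"
    unfolding embed_vec_def using assms by (intro sum.cong refl) (auto dest: inj_onD)
  then show ?thesis using assms(2) by (simp add: sum.delta')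
qed

lemma embed_vec_support: "{a. embed_vec n s y a \<noteq> 0} \<subseteq> s ` {..<n}"
  unfolding embed_vec_def
  by (auto elim!: sum.not_neutral_contains_not_neutral split: if_splits)

lemma l2norm_embed_vec:
  assumes "inj_on s {..<n}"
  shows "l2norm (embed_vec n s y) = sqrt (\<Sum>i<n. (cmod (y i))\<^sup>2)"
proof -
  have "l2norm (embed_vec n s y) = sqrt (\<Sum>a\<in>s ` {..<n}. (cmod (embed_vec n s y a))\<^sup>2)"
    by (rule l2norm_eq_sum[OF _ embed_vec_support]) simp
  also have "\<dots> = sqrt (\<Sum>i<n. (cmod (y i))\<^sup>2)"
    using assms by (simp add: sum.reindex embed_vec_at)
  finally show ?thesis .
qed

lemma embed_mat_at:
  assumes "inj_on s {..<n}" "inj_on t {..<n}" "k < n" "l < n"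
  shows "embed_mat n s t c (s k) (t l) = c k l"
proof -
  have "embed_mat n s t c (s k) (t l) = (\<Sum>i<n. \<Sum>j<n. if i = k \<and> j = l then c i j else 0)"
    unfolding embed_mat_def using assms by (intro sum.cong refl) (auto dest: inj_onD)
  also have "\<dots> = (\<Sum>i<n. if i = k then c k l else 0)"
    using assms(4) by (intro sum.cong refl) (simp add: sum.delta')
  finally show ?thesis using assms(3) by (simp add: sum.delta')
qed

lemma fsupp_mat_embed_mat:
  assumes "s ` {..<n} \<subseteq> I" "t ` {..<n} \<subseteq> I"
  shows "fsupp_mat I (embed_mat n s t c)"
proof -
  have "{(a, b). embed_mat n s t c a b \<noteq> 0} \<subseteq> s ` {..<n} \<times> t ` {..<n}"
    unfolding embed_mat_def
    by (auto elim!: sum.not_neutral_contains_not_neutral split: if_splits)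
  with assms show ?thesis
    unfolding fsupp_mat_def by (meson finite_SigmaI finite_imageI finite_lessThan finite_subset order_trans
        Sigma_mono)
qed

lemma schur_prod_embed_mat:
  fixes A :: "'i \<Rightarrow> 'i \<Rightarrow> complex"
  shows "schur_prod A (embed_mat n s t c) = embed_mat n s t (\<lambda>i j. A (s i) (t j) * c i j)"
  unfolding schur_prod_def embed_mat_def
  by (intro ext) (auto simp: sum_distrib_left intro!: sum.cong)

lemma matvec_embed_mat:
  assumes "finite {b. x b \<noteq> 0}"
  shows "matvec (embed_mat n s t c) x = embed_vec n s (\<lambda>i. \<Sum>j<n. c i j * x (t j))"
proof
  fix a
  let ?S = "{b. x b \<noteq> 0}"
  have "matvec (embed_mat n s t c) x a
      = (\<Sum>i<n. \<Sum>j<n. \<Sum>b\<in>?S. if a = s i \<and> b = t j then c i j * x b else 0)"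
    unfolding matvec_def embed_mat_def sum_distrib_right
    by (subst sum.swap, subst sum.swap) (auto intro!: sum.cong)
  also have "\<dots> = (\<Sum>i<n. \<Sum>j<n. if a = s i then c i j * x (t j) else 0)"
    using assms by (intro sum.cong refl) (auto simp: sum.delta' cong: if_cong)
  also have "\<dots> = embed_vec n s (\<lambda>i. \<Sum>j<n. c i j * x (t j)) a"
    unfolding embed_vec_def by (intro sum.cong refl) auto
  finally show "matvec (embed_mat n s t c) x a = embed_vec n s (\<lambda>i. \<Sum>j<n. c i j * x (t j)) a" .
qed

lemma l2norm_matvec_embed_mat:
  assumes "inj_on s {..<n}" "finite {b. x b \<noteq> 0}"
  shows "l2norm (matvec (embed_mat n s t c) x) = sqrt (\<Sum>i<n. (cmod (\<Sum>j<n. c i j * x (t j)))\<^sup>2)"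
  using assms by (simp add: matvec_embed_mat l2norm_embed_vec)

definition contraction :: "nat \<Rightarrow> (nat \<Rightarrow> nat \<Rightarrow> complex) \<Rightarrow> bool" where
  "contraction n c \<longleftrightarrow> (\<forall>z. (\<Sum>i<n. (cmod (\<Sum>j<n. c i j * z j))\<^sup>2) \<le> (\<Sum>j<n. (cmod (z j))\<^sup>2))"

lemma bdd_above_op_norm_embed_mat:
  assumes "inj_on s {..<n}" "inj_on t {..<n}"
  shows "bdd_above {l2norm (matvec (embed_mat n s t c) x) | x. fsupp_vec I x \<and> l2norm x \<le> 1}"
proof -
  have "l2norm (matvec (embed_mat n s t c) x) \<le> sqrt (\<Sum>i<n. (\<Sum>j<n. cmod (c i j))\<^sup>2)"
    if x: "fsupp_vec I x" "l2norm x \<le> 1" for x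
  proof -
    have fin: "finite {b. x b \<noteq> 0}" using x(1) unfolding fsupp_vec_def by auto
    have "(cmod (x (t j)))\<^sup>2 \<le> 1" if "j < n" for j
    proof -
      have "(cmod (x (t j)))\<^sup>2 \<le> (\<Sum>j<n. (cmod (x (t j)))\<^sup>2)"
        using that by (intro member_le_sum) auto
      also have "\<dots> \<le> (l2norm x)\<^sup>2" by (rule sum_sq_le_l2norm_sq[OF fin assms(2)])
      also have "\<dots> \<le> 1" by (rule power_le_one[OF l2norm_nonneg x(2)])
      finally show ?thesis .
    qed
    then have x_le_1: "cmod (x (t j)) \<le> 1" if "j < n" for j
      using that by (simp add: power_le_one_iff)
    have "cmod (\<Sum>j<n. c i j * x (t j)) \<le> (\<Sum>j<n. cmod (c i j))" for i
      by (rule order_trans[OF norm_sum sum_mono])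
        (auto simp: norm_mult intro: mult_left_le[OF x_le_1])
    then have "(\<Sum>i<n. (cmod (\<Sum>j<n. c i j * x (t j)))\<^sup>2) \<le> (\<Sum>i<n. (\<Sum>j<n. cmod (c i j))\<^sup>2)"
      by (intro sum_mono power_mono) auto
    then show ?thesis
      using l2norm_matvec_embed_mat[OF assms(1) fin] by simp
  qed
  then show ?thesis unfolding bdd_above_def by blast
qed

lemma op_norm_embed_mat_ge:
  assumes "inj_on s {..<n}" "inj_on t {..<n}" "t ` {..<n} \<subseteq> I"
    and z: "(\<Sum>j<n. (cmod (z j))\<^sup>2) \<le> 1"
  shows "sqrt (\<Sum>i<n. (cmod (\<Sum>j<n. c i j * z j))\<^sup>2) \<le> op_norm_on I (embed_mat n s t c)"
proof -
  define x where "x = embed_vec n t z"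
  have fin: "finite {a. x a \<noteq> 0}"
    unfolding x_def by (rule finite_subset[OF embed_vec_support]) simp
  have x_fsupp: "fsupp_vec I x"
    using fin embed_vec_support[of n t z] assms(3) unfolding fsupp_vec_def x_def by blast
  have x_le_1: "l2norm x \<le> 1"
    using z by (simp add: x_def l2norm_embed_vec[OF assms(2)])
  have "l2norm (matvec (embed_mat n s t c) x) \<le> op_norm_on I (embed_mat n s t c)"
    unfolding op_norm_on_def
    by (rule cSup_upper[OF _ bdd_above_op_norm_embed_mat[OF assms(1,2)]]) (use x_fsupp x_le_1 in blast)
  moreover have "(\<Sum>j<n. c i j * x (t j)) = (\<Sum>j<n. c i j * z j)" for i
    unfolding x_def by (intro sum.cong refl) (simp add: embed_vec_at[OF assms(2)])
  ultimately show ?thesis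
    using l2norm_matvec_embed_mat[OF assms(1) fin] by simp
qed

lemma op_norm_embed_mat_pos:
  assumes "inj_on s {..<n}" "inj_on t {..<n}" "t ` {..<n} \<subseteq> I" "k < n" "l < n" "c k l \<noteq> 0"
  shows "0 < op_norm_on I (embed_mat n s t c)"
proof -
  let ?e = "\<lambda>j. if j = l then 1 else 0 :: complex"
  have "(\<Sum>j<n. c i j * ?e j) = (\<Sum>j<n. if j = l then c i j else 0)" for i
    by (intro sum.cong) auto
  then have e: "(\<Sum>j<n. c i j * ?e j) = c i l" for i
    using assms(5) by simp
  have "(\<Sum>j<n. (cmod (?e j))\<^sup>2) = (\<Sum>j<n. if j = l then 1 else 0)"
    by (intro sum.cong) auto
  then have "(\<Sum>j<n. (cmod (?e j))\<^sup>2) = 1"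
    using assms(5) by simp
  then have "sqrt (\<Sum>i<n. (cmod (c i l))\<^sup>2) \<le> op_norm_on I (embed_mat n s t c)"
    using op_norm_embed_mat_ge[OF assms(1-3), of ?e c] by (simp add: e)
  moreover have "(cmod (c k l))\<^sup>2 \<le> (\<Sum>i<n. (cmod (c i l))\<^sup>2)"
    using assms(4) by (intro member_le_sum) auto
  then have "cmod (c k l) \<le> sqrt (\<Sum>i<n. (cmod (c i l))\<^sup>2)"
    by (rule real_le_rsqrt)
  moreover have "0 < cmod (c k l)"
    using assms(6) by simp
  ultimately show ?thesis
    by linarith
qed

lemma op_norm_embed_mat_le_1:
  assumes "inj_on s {..<n}" "inj_on t {..<n}" "contraction n c"
  shows "op_norm_on I (embed_mat n s t c) \<le> 1"
  unfolding op_norm_on_def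
proof (rule cSup_least)
  have "fsupp_vec I (\<lambda>_. 0)" "l2norm (\<lambda>_. 0 :: complex) \<le> 1"
    by (auto simp: fsupp_vec_def l2norm_def)
  then show "{l2norm (matvec (embed_mat n s t c) x) | x. fsupp_vec I x \<and> l2norm x \<le> 1} \<noteq> {}"
    by blast
next
  fix r assume "r \<in> {l2norm (matvec (embed_mat n s t c) x) | x. fsupp_vec I x \<and> l2norm x \<le> 1}"
  then obtain x where x: "fsupp_vec I x" "l2norm x \<le> 1"
    and r: "r = l2norm (matvec (embed_mat n s t c) x)" by blast
  have fin: "finite {b. x b \<noteq> 0}" using x(1) unfolding fsupp_vec_def by auto
  have "(\<Sum>i<n. (cmod (\<Sum>j<n. c i j * x (t j)))\<^sup>2) \<le> (\<Sum>j<n. (cmod (x (t j)))\<^sup>2)"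
    using assms(3) unfolding contraction_def by (rule allE[where x="\<lambda>j. x (t j)"])
  also have "\<dots> \<le> (l2norm x)\<^sup>2" by (rule sum_sq_le_l2norm_sq[OF fin assms(2)])
  also have "\<dots> \<le> 1" by (rule power_le_one[OF l2norm_nonneg x(2)])
  finally show "r \<le> 1"
    using r l2norm_matvec_embed_mat[OF assms(1) fin] by simp
qed

lemma schur_norm_ge_embedded:
  fixes M c :: "nat \<Rightarrow> nat \<Rightarrow> complex"
  assumes "inj_on s {..<n}" "inj_on t {..<n}" "s ` {..<n} \<subseteq> I" "t ` {..<n} \<subseteq> I"
    and A: "\<forall>i<n. \<forall>j<n. A (s i) (t j) = M i j"
    and c: "contraction n c" "k < n" "l < n" "c k l \<noteq> 0"
    and z: "(\<Sum>j<n. (cmod (z j))\<^sup>2) \<le> 1"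
  shows "ereal (sqrt (\<Sum>i<n. (cmod (\<Sum>j<n. M i j * c i j * z j))\<^sup>2)) \<le> schur_norm I A"
proof -
  let ?X = "embed_mat n s t c"
  let ?r = "sqrt (\<Sum>i<n. (cmod (\<Sum>j<n. M i j * c i j * z j))\<^sup>2)"
  have "embed_mat n s t (\<lambda>i j. A (s i) (t j) * c i j) = embed_mat n s t (\<lambda>i j. M i j * c i j)"
    unfolding embed_mat_def using A by (intro ext sum.cong refl) auto
  then have r: "?r \<le> op_norm_on I (schur_prod A ?X)"
    using op_norm_embed_mat_ge[OF assms(1,2,4) z, of "\<lambda>i j. M i j * c i j"]
    by (simp add: schur_prod_embed_mat)
  have "0 < op_norm_on I ?X" "op_norm_on I ?X \<le> 1"
    using op_norm_embed_mat_pos[where c=c, OF assms(1,2,4) c(2-4)]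
      op_norm_embed_mat_le_1[OF assms(1,2) c(1)] by auto
  moreover have "0 \<le> ?r"
    by (simp add: sum_nonneg)
  ultimately have "?r \<le> op_norm_on I (schur_prod A ?X) / op_norm_on I ?X"
    using r mult_left_le[of "op_norm_on I ?X" ?r] by (simp add: le_divide_eq)
  then have "ereal ?r \<le> ereal (op_norm_on I (schur_prod A ?X) / op_norm_on I ?X)"
    by simp
  also have "\<dots> \<le> schur_norm I A"
  proof -
    have "?X (s k) (t l) \<noteq> 0"
      using embed_mat_at[OF assms(1,2) c(2,3)] c(4) by simp
    then have "?X \<noteq> (\<lambda>_ _. 0)" by auto
    then show ?thesis
      unfolding schur_norm_def using fsupp_mat_embed_mat[OF assms(3,4)] by (blast intro: Sup_upper)
  qed
  finally show ?thesis .
qed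

text \<open>\<open>2/3 J - 1 = 2 v v\<^sup>* - 1\<close> for the unit vector \<open>v = (1,1,1)/\<surd>3\<close>, a unitary reflection.\<close>
definition reflection3 :: "nat \<Rightarrow> nat \<Rightarrow> complex" where
  "reflection3 i j = (if i = j then -1/3 else 2/3)"

lemma sum_lessThan_3: "(\<Sum>i<3::nat. f i) = f 0 + f 1 + (f 2 :: 'a::comm_monoid_add)"
  by (simp add: eval_nat_numeral)

lemma contraction_reflection3: "contraction 3 reflection3"
proof -
  have "(\<Sum>i<3. (cmod (\<Sum>j<3. reflection3 i j * z j))\<^sup>2) = (\<Sum>j<3::nat. (cmod (z j))\<^sup>2)" for z
    by (simp only: sum_lessThan_3 cmod_power2)
      (simp add: reflection3_def power2_eq_square algebra_simps)
  then show ?thesis unfolding contraction_def by simp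
qed

text \<open>A rational unit vector close to the top singular vector of \<open>F\<^sub>0 \<bullet> reflection3\<close>.\<close>
definition test_vector :: "nat \<Rightarrow> complex" where
  "test_vector j = (if j = 0 then 41/59 else -30/59)"

lemma test_vector_unit: "(\<Sum>j<3::nat. (cmod (test_vector j))\<^sup>2) = 1"
  by (simp add: sum_lessThan_3 test_vector_def cmod_power2 power2_eq_square)

lemma F0_reflection3_test_vector:
  "26/16 \<le> (\<Sum>i<3. (cmod (\<Sum>j<3. F0 i j * reflection3 i j * test_vector j))\<^sup>2)"
  by (simp add: sum_lessThan_3 reflection3_def F0_def test_vector_def cmod_power2 power2_eq_square)

lemma sqrt_26_div_4_gt: "(1 + sqrt 2) / 2 < sqrt 26 / 4"
proof -
  have "sqrt 2 < 1.42" by (rule real_less_lsqrt) (auto simp: power2_eq_square)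
  moreover have "5.09 < sqrt 26" by (rule real_less_rsqrt) (auto simp: power2_eq_square)
  ultimately show ?thesis by simp
qed

lemma schur_norm_ge_if_F0_submatrix:
  assumes "inj_on s {..<3}" "inj_on t {..<3}" "s ` {..<3} \<subseteq> I" "t ` {..<3} \<subseteq> I"
    and "\<forall>i<3. \<forall>j<3. A (s i) (t j) = F0 i j"
  shows "ereal (sqrt 26 / 4) \<le> schur_norm I A"
proof -
  have "sqrt 26 / 4 \<le> sqrt (\<Sum>i<3. (cmod (\<Sum>j<3. F0 i j * reflection3 i j * test_vector j))\<^sup>2)"
    using F0_reflection3_test_vector by (intro real_le_rsqrt) (simp add: power_divide)
  also have "ereal \<dots> \<le> schur_norm I A"
    by (rule schur_norm_ge_embedded[OF assms contraction_reflection3, of 0 0])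
      (auto simp: reflection3_def test_vector_unit)
  finally show ?thesis by simp
qed

theorem mainTheorem3:
  shows "schur_norm {0,1,2::nat} F0 \<ge> ereal (sqrt 26 / 4)
    \<and> sqrt 26 / 4 > (1 + sqrt 2) / 2
    \<and> (\<forall>(I :: 'i set) (A :: 'i \<Rightarrow> 'i \<Rightarrow> complex) s1 s2 s3 t1 t2 t3.
          s1 \<in> I \<and> s2 \<in> I \<and> s3 \<in> I \<and> t1 \<in> I \<and> t2 \<in> I \<and> t3 \<in> I
          \<and> distinct [s1, s2, s3] \<and> distinct [t1, t2, t3]
          \<and> (\<forall>i<3. \<forall>j<3. A ([s1, s2, s3] ! i) ([t1, t2, t3] ! j) = F0 i j)
          \<longrightarrow> schur_norm I A > ereal ((1 + sqrt 2) / 2))"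
proof (intro conjI allI impI)
  show "schur_norm {0,1,2::nat} F0 \<ge> ereal (sqrt 26 / 4)"
    by (rule schur_norm_ge_if_F0_submatrix[where s=id and t=id]) (auto simp: lessThan_nat_numeral)
  show "sqrt 26 / 4 > (1 + sqrt 2) / 2" by (rule sqrt_26_div_4_gt)
next
  fix I :: "'i set" and A :: "'i \<Rightarrow> 'i \<Rightarrow> complex" and s1 s2 s3 t1 t2 t3
  assume h: "s1 \<in> I \<and> s2 \<in> I \<and> s3 \<in> I \<and> t1 \<in> I \<and> t2 \<in> I \<and> t3 \<in> I
          \<and> distinct [s1, s2, s3] \<and> distinct [t1, t2, t3]
          \<and> (\<forall>i<3. \<forall>j<3. A ([s1, s2, s3] ! i) ([t1, t2, t3] ! j) = F0 i j)"
  have "ereal ((1 + sqrt 2) / 2) < ereal (sqrt 26 / 4)"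
    using sqrt_26_div_4_gt by simp
  also have "\<dots> \<le> schur_norm I A"
    by (rule schur_norm_ge_if_F0_submatrix[where s="(!) [s1, s2, s3]" and t="(!) [t1, t2, t3]"])
      (use h in \<open>auto simp: lessThan_nat_numeral intro!: inj_on_nth\<close>)
  finally show "schur_norm I A > ereal ((1 + sqrt 2) / 2)" .
qed

end
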